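(* For all positive integers $m,n,w,d$ with $n\ge 2$, $w\le m$ and $d\ge w+1$, we have $A(m,n,w,d)\le A(m,n-1,w,d-w)$.
   Context: $J(m,w)$ denotes the set of binary vectors of length $m$ and Hamming weight $w$. Elements of $J(m,w)^n$ are identified with $m\times n$ binary matrices all of whose columns have weight $w$, with distance the binary Hamming distance (number of differing entries). $A(m,n,w,d)$ denotes the maximum cardinality of a nonempty subset of $J(m,w)^n$ in which any two distinct elements are at Hamming distance at least $2d$. *)

theory Defs
  imports Main
begin

text \<open>An m x n binary matrix is represented as a function nat => nat => bool
  that is False outside the index range {..<m} x {..<n}.
  const_wt_mats m n w is J(m,w)^n: all m x n binary matrices whose every column
  has Hamming weight w.\<close>

definition const_wt_mats :: "nat \<Rightarrow> nat \<Rightarrow> nat \<Rightarrow> (nat \<Rightarrow> nat \<Rightarrow> bool) set" where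
  "const_wt_mats m n w =
     {M. (\<forall>i j. M i j \<longrightarrow> i < m \<and> j < n) \<and>
         (\<forall>j<n. card {i. i < m \<and> M i j} = w)}"

definition mat_hdist :: "nat \<Rightarrow> nat \<Rightarrow> (nat \<Rightarrow> nat \<Rightarrow> bool) \<Rightarrow> (nat \<Rightarrow> nat \<Rightarrow> bool) \<Rightarrow> nat" where
  "mat_hdist m n M N = card {(i, j). i < m \<and> j < n \<and> M i j \<noteq> N i j}"

definition A_code :: "nat \<Rightarrow> nat \<Rightarrow> nat \<Rightarrow> nat \<Rightarrow> nat" where
  "A_code m n w d = Max {card C | C. C \<subseteq> const_wt_mats m n w \<and> C \<noteq> {} \<and>
      (\<forall>x\<in>C. \<forall>y\<in>C. x \<noteq> y \<longrightarrow> 2 * d \<le> mat_hdist m n x y)}"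

end

theory Submission
  imports Defs
begin

text \<open>Deleting the last column of every codeword of a code in J(m,w)^n loses at most 2w of
  each pairwise distance, since two weight-w columns differ in at most 2w positions. When
  d > w this keeps distinct codewords distinct, so the truncated code has the same size
  and minimum distance at least 2(d - w).\<close>

definition is_code :: "nat \<Rightarrow> nat \<Rightarrow> nat \<Rightarrow> nat \<Rightarrow> (nat \<Rightarrow> nat \<Rightarrow> bool) set \<Rightarrow> bool" where
  "is_code m n w d C \<longleftrightarrow> C \<subseteq> const_wt_mats m n w \<and> C \<noteq> {} \<and>
     (\<forall>x\<in>C. \<forall>y\<in>C. x \<noteq> y \<longrightarrow> 2 * d \<le> mat_hdist m n x y)"

lemma A_code_eq_Max_is_code: "A_code m n w d = Max {card C | C. is_code m n w d C}"
  unfolding A_code_def is_code_def ..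

lemma finite_const_wt_mats: "finite (const_wt_mats m n w)"
proof -
  have "const_wt_mats m n w \<subseteq> (\<lambda>A i j. (i, j) \<in> A) ` Pow ({..<m} \<times> {..<n})"
  proof
    fix M assume "M \<in> const_wt_mats m n w"
    then have "{(i, j). M i j} \<in> Pow ({..<m} \<times> {..<n})"
      unfolding const_wt_mats_def by auto
    moreover have "M = (\<lambda>i j. (i, j) \<in> {(i, j). M i j})" by simp
    ultimately show "M \<in> (\<lambda>A i j. (i, j) \<in> A) ` Pow ({..<m} \<times> {..<n})" by blast
  qed
  then show ?thesis by (rule finite_subset) simp
qed

lemma top_rows_mem_const_wt_mats:
  assumes "w \<le> m"
  shows "(\<lambda>i j. i < w \<and> j < n) \<in> const_wt_mats m n w"
proof -
  have "{i. i < m \<and> i < w \<and> j < n} = {..<w}" if "j < n" for j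
    using assms that by auto
  then show ?thesis using assms unfolding const_wt_mats_def by auto
qed

lemma finite_card_codes: "finite {card C | C. is_code m n w d C}"
proof (rule finite_subset)
  show "{card C | C. is_code m n w d C} \<subseteq> {..card (const_wt_mats m n w)}"
  proof
    fix s assume "s \<in> {card C | C. is_code m n w d C}"
    then obtain C where "s = card C" "C \<subseteq> const_wt_mats m n w"
      unfolding is_code_def by blast
    then show "s \<in> {..card (const_wt_mats m n w)}"
      by (simp add: card_mono finite_const_wt_mats)
  qed
qed simp

lemma card_le_A_code: "is_code m n w d C \<Longrightarrow> card C \<le> A_code m n w d"
  unfolding A_code_eq_Max_is_code by (blast intro: Max_ge finite_card_codes)

lemma A_code_attained:
  assumes "w \<le> m"
  obtains C where "is_code m n w d C" "card C = A_code m n w d"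
proof -
  have "is_code m n w d {\<lambda>i j. i < w \<and> j < n}"
    using top_rows_mem_const_wt_mats[OF assms] unfolding is_code_def by simp
  then have "{card C | C. is_code m n w d C} \<noteq> {}" by auto
  with finite_card_codes have "A_code m n w d \<in> {card C | C. is_code m n w d C}"
    unfolding A_code_eq_Max_is_code by (rule Max_in)
  then obtain C where "is_code m n w d C" "A_code m n w d = card C" by auto
  then show ?thesis using that by simp
qed

definition truncate_cols :: "nat \<Rightarrow> (nat \<Rightarrow> nat \<Rightarrow> bool) \<Rightarrow> nat \<Rightarrow> nat \<Rightarrow> bool" where
  "truncate_cols k M = (\<lambda>i j. M i j \<and> j < k)"

lemma truncate_cols_const_wt_mats:
  assumes "x \<in> const_wt_mats m n w" "k \<le> n"
  shows "truncate_cols k x \<in> const_wt_mats m k w"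
  using assms unfolding const_wt_mats_def truncate_cols_def by auto

lemma mat_hdist_truncate_last_col:
  assumes x: "x \<in> const_wt_mats m (Suc k) w" and y: "y \<in> const_wt_mats m (Suc k) w"
  shows "mat_hdist m (Suc k) x y \<le> mat_hdist m k (truncate_cols k x) (truncate_cols k y) + 2 * w"
proof -
  let ?D = "{(i, j). i < m \<and> j < k \<and> x i j \<noteq> y i j}"
  let ?L = "{(i, j). i < m \<and> j = k \<and> x i j \<noteq> y i j}"
  let ?X = "{i. i < m \<and> x i k}" and ?Y = "{i. i < m \<and> y i k}"
  have "?L \<subseteq> (\<lambda>i. (i, k)) ` (?X \<union> ?Y)" by auto
  then have "card ?L \<le> card ((\<lambda>i. (i, k)) ` (?X \<union> ?Y))"
    by (rule card_mono[rotated]) auto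
  also have "\<dots> \<le> card (?X \<union> ?Y)" by (rule card_image_le) auto
  also have "\<dots> \<le> card ?X + card ?Y" by (rule card_Un_le)
  also have "\<dots> = 2 * w" using x y unfolding const_wt_mats_def by auto
  finally have last_col: "card ?L \<le> 2 * w" .
  have "{(i, j). i < m \<and> j < Suc k \<and> x i j \<noteq> y i j} = ?D \<union> ?L" by auto
  then have "mat_hdist m (Suc k) x y \<le> card ?D + card ?L"
    unfolding mat_hdist_def by (simp add: card_Un_le)
  moreover have "mat_hdist m k (truncate_cols k x) (truncate_cols k y) = card ?D"
    unfolding mat_hdist_def truncate_cols_def by (rule arg_cong[where f = card]) auto
  ultimately show ?thesis using last_col by simp
qed

lemma is_code_truncate_last_col:
  assumes C: "is_code m (Suc k) w d C" and "w < d"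
  shows "is_code m k w (d - w) (truncate_cols k ` C)"
    and "card (truncate_cols k ` C) = card C"
proof -
  have C_sub: "C \<subseteq> const_wt_mats m (Suc k) w"
    and C_dist: "\<And>x y. x \<in> C \<Longrightarrow> y \<in> C \<Longrightarrow> x \<noteq> y \<Longrightarrow> 2 * d \<le> mat_hdist m (Suc k) x y"
    using C unfolding is_code_def by auto
  have dist: "2 * (d - w) \<le> mat_hdist m k (truncate_cols k x) (truncate_cols k y)"
    if "x \<in> C" "y \<in> C" "x \<noteq> y" for x y
  proof -
    have "2 * d \<le> mat_hdist m k (truncate_cols k x) (truncate_cols k y) + 2 * w"
      using C_dist[OF that] mat_hdist_truncate_last_col[of x m k w y] C_sub that
      by (meson le_trans subsetD)
    then show ?thesis by simp
  qed
  have "inj_on (truncate_cols k) C"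
  proof (rule inj_onI, rule ccontr)
    fix x y assume "x \<in> C" "y \<in> C" "truncate_cols k x = truncate_cols k y" "x \<noteq> y"
    with dist[of x y] \<open>w < d\<close> show False by (simp add: mat_hdist_def)
  qed
  then show "card (truncate_cols k ` C) = card C" by (rule card_image)
  have "truncate_cols k ` C \<subseteq> const_wt_mats m k w"
    using C_sub truncate_cols_const_wt_mats[of _ m "Suc k" w k] by auto
  moreover have "truncate_cols k ` C \<noteq> {}" using C unfolding is_code_def by simp
  ultimately show "is_code m k w (d - w) (truncate_cols k ` C)"
    unfolding is_code_def using dist by (auto simp: image_iff)
qed

theorem proposition2:
  fixes m n w d :: nat
  assumes "0 < m" "0 < n" "0 < w" "0 < d"
    and "n \<ge> 2" and "w \<le> m" and "d \<ge> w + 1"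
  shows "A_code m n w d \<le> A_code m (n - 1) w (d - w)"
proof -
  obtain C where C: "is_code m n w d C" "card C = A_code m n w d"
    using A_code_attained[OF \<open>w \<le> m\<close>] .
  have n: "n = Suc (n - 1)" using \<open>n \<ge> 2\<close> by simp
  have "w < d" using \<open>d \<ge> w + 1\<close> by simp
  have "is_code m (Suc (n - 1)) w d C" using C(1) n by simp
  note truncated = is_code_truncate_last_col[OF this \<open>w < d\<close>]
  have "A_code m n w d = card (truncate_cols (n - 1) ` C)" using C(2) truncated(2) by simp
  also have "\<dots> \<le> A_code m (n - 1) w (d - w)" by (rule card_le_A_code[OF truncated(1)])
  finally show ?thesis .
qed

end
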